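(* Let $\alpha\in(0,1)$. Consider the repeated game with action sets $\mathcal{A}$, $\mathcal{B}$ and vector payoff $m_{\mathrm{reg}}:\mathcal{A}\times\mathcal{B}\to\mathbb{R}\times\mathbb{R}^{\mathcal{A}}$, $$m_{\mathrm{reg}}(a,b)=\Big(\mathbf{1}_{b\le a},\ \big(\ell_\alpha(a,b)-\ell_\alpha(a',b)\big)_{a'\in\mathcal{A}}\Big),\qquad \ell_\alpha(a,b)=(\alpha-\mathbf{1}_{b\le a})(b-a).$$ Then the closed convex set $S_{\mathrm{reg}}=[0,\alpha]\times(-\infty,0]^{\mathcal{A}}$ is not approachable: there is no strategy of the learner guaranteeing, for every strategy of the opponent, $d\big(\frac1T\sum_{t=1}^T m_{\mathrm{reg}}(a_t,b_t),S_{\mathrm{reg}}\big)\to0$ almost surely.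
   Context: Fix $n\ge1$; $\mathcal{A}=\{k/(n+1):k=0,\dots,n+1\}$ (so $|\mathcal{A}|=n+2$), $\mathcal{B}=\{k/(n+1):k=1,\dots,n+1\}$. Repeated game: at each round $t$ the learner chooses a mixed action on $\mathcal{A}$ and the opponent a mixed action on $\mathcal{B}$, both as functions of the past, and $a_t$, $b_t$ are drawn independently from them given the past. $d$ denotes Euclidean point-to-set distance. *)

theory Defs
  imports "HOL-Probability.Probability"
begin

definition actA :: "nat \<Rightarrow> real set" where
  "actA n = {real k / real (n + 1) | k. k \<le> n + 1}"

definition actB :: "nat \<Rightarrow> real set" where
  "actB n = {real k / real (n + 1) | k. 1 \<le> k \<and> k \<le> n + 1}"

definition pinball :: "real \<Rightarrow> real \<Rightarrow> real \<Rightarrow> real" where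
  "pinball \<alpha> a b = (\<alpha> - (if b \<le> a then 1 else 0)) * (b - a)"

text \<open>Vectors of R x R^A are represented as functions on the index set
  insert None (Some ` A): coordinate None is the first (real) component,
  coordinate Some a' is the component indexed by a' in A.\<close>
definition coords :: "nat \<Rightarrow> real option set" where
  "coords n = insert None (Some ` actA n)"

definition m_reg :: "real \<Rightarrow> real \<Rightarrow> real \<Rightarrow> real option \<Rightarrow> real" where
  "m_reg \<alpha> a b i = (case i of
      None \<Rightarrow> (if b \<le> a then 1 else 0)
    | Some a' \<Rightarrow> pinball \<alpha> a b - pinball \<alpha> a' b)"

definition S_reg :: "nat \<Rightarrow> real \<Rightarrow> (real option \<Rightarrow> real) set" where
  "S_reg n \<alpha> = {v. 0 \<le> v None \<and> v None \<le> \<alpha> \<and> (\<forall>a'\<in>actA n. v (Some a') \<le> 0)}"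

definition eucl_setdist :: "'i set \<Rightarrow> ('i \<Rightarrow> real) \<Rightarrow> ('i \<Rightarrow> real) set \<Rightarrow> real" where
  "eucl_setdist I v S = Inf {sqrt (\<Sum>i\<in>I. (v i - s i)^2) | s. s \<in> S}"

definition hist :: "(nat \<Rightarrow> 'w \<Rightarrow> real) \<Rightarrow> (nat \<Rightarrow> 'w \<Rightarrow> real) \<Rightarrow> nat \<Rightarrow> 'w \<Rightarrow> (real \<times> real) list" where
  "hist a b t \<omega> = map (\<lambda>i. (a i \<omega>, b i \<omega>)) [0..<t]"

definition strategy_on :: "real set \<Rightarrow> ((real \<times> real) list \<Rightarrow> real pmf) \<Rightarrow> bool" where
  "strategy_on X \<sigma> \<longleftrightarrow> (\<forall>h. set_pmf (\<sigma> h) \<subseteq> X)"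

text \<open>The random processes a, b on probability space M realize the play of
  learner strategy sigma against opponent strategy tau: given the past, a_t and b_t
  are drawn independently from sigma(past) and tau(past).\<close>
definition play_realization ::
  "'w measure \<Rightarrow> ((real \<times> real) list \<Rightarrow> real pmf) \<Rightarrow> ((real \<times> real) list \<Rightarrow> real pmf)
     \<Rightarrow> (nat \<Rightarrow> 'w \<Rightarrow> real) \<Rightarrow> (nat \<Rightarrow> 'w \<Rightarrow> real) \<Rightarrow> bool" where
  "play_realization M \<sigma> \<tau> a b \<longleftrightarrow>
     prob_space M \<and>
     (\<forall>t. a t \<in> borel_measurable M \<and> b t \<in> borel_measurable M) \<and>
     (\<forall>t h x y. measure M {\<omega>\<in>space M. hist a b t \<omega> = h \<and> a t \<omega> = x \<and> b t \<omega> = y}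
        = measure M {\<omega>\<in>space M. hist a b t \<omega> = h} * pmf (\<sigma> h) x * pmf (\<tau> h) y)"

definition avg_payoff :: "real \<Rightarrow> (nat \<Rightarrow> 'w \<Rightarrow> real) \<Rightarrow> (nat \<Rightarrow> 'w \<Rightarrow> real) \<Rightarrow> nat \<Rightarrow> 'w
    \<Rightarrow> real option \<Rightarrow> real" where
  "avg_payoff \<alpha> a b T \<omega> i = (\<Sum>t<T. m_reg \<alpha> (a t \<omega>) (b t \<omega>) i) / real T"

end

theory Submission
  imports Defs
begin

text \<open>Let the opponent always play the smallest action c = 1/(n+1). Then b \<le> a exactly
  when the learner does not play 0, so the first coordinate of the average payoff is the
  frequency p of nonzero actions, while against the comparison action c every round in which
  the learner plays 0 costs regret \<alpha> c and no round has negative regret. The c-coordinate is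
  therefore at least (1 - p) \<alpha> c, which keeps the average payoff at distance at least
  (1 - \<alpha>) \<alpha> c / 2 from S_reg on every path. The play of an arbitrary learner strategy
  against this opponent is realised as a measure on paths via the Daniell-Kolmogorov theorem,
  applied to the finite-dimensional distributions of the sequential draws.\<close>

primrec path_pmf :: "('a list \<Rightarrow> 'a pmf) \<Rightarrow> nat \<Rightarrow> 'a list pmf" where
  "path_pmf K 0 = return_pmf []"
| "path_pmf K (Suc k) = path_pmf K k \<bind> (\<lambda>l. map_pmf (\<lambda>x. l @ [x]) (K l))"

lemma length_of_set_path_pmf: "l \<in> set_pmf (path_pmf K k) \<Longrightarrow> length l = k"
  by (induction k arbitrary: l) auto

lemma map_take_path_pmf: "k \<le> N \<Longrightarrow> map_pmf (take k) (path_pmf K N) = path_pmf K k"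
proof (induction N)
  case 0
  then show ?case by simp
next
  case (Suc N)
  show ?case
  proof (cases "k = Suc N")
    case True
    have "map_pmf (take k) (path_pmf K (Suc N)) = map_pmf id (path_pmf K (Suc N))"
      by (rule map_pmf_cong) (auto dest: length_of_set_path_pmf simp: True)
    then show ?thesis by (simp add: True)
  next
    case False
    with Suc have "k \<le> N" by simp
    have "map_pmf (take k) (path_pmf K (Suc N))
        = path_pmf K N \<bind> (\<lambda>l. map_pmf (\<lambda>x. take k (l @ [x])) (K l))"
      by (simp add: map_bind_pmf map_pmf_comp)
    also have "\<dots> = path_pmf K N \<bind> (\<lambda>l. return_pmf (take k l))"
      using \<open>k \<le> N\<close> by (intro bind_pmf_cong) (auto dest: length_of_set_path_pmf simp: map_pmf_const)
    also have "\<dots> = path_pmf K k"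
      using Suc.IH \<open>k \<le> N\<close> by (simp add: map_pmf_def)
    finally show ?thesis .
  qed
qed

lemma pmf_path_pmf_snoc: "pmf (path_pmf K (Suc k)) (l @ [x]) = pmf (path_pmf K k) l * pmf (K l) x"
proof -
  have "pmf (map_pmf (\<lambda>x. l' @ [x]) (K l')) (l @ [x]) = pmf (K l) x * indicator {l} l'" for l'
  proof (cases "l' = l")
    case True
    have "inj (\<lambda>x. l @ [x])" by (simp add: inj_def)
    then show ?thesis using True pmf_map_inj'[of "\<lambda>x. l @ [x]"] by simp
  next
    case False
    then show ?thesis by (auto simp: pmf_eq_0_set_pmf)
  qed
  then show ?thesis by (simp add: pmf_bind measure_pmf_single)
qed

definition path_marginal :: "('a::topological_space list \<Rightarrow> 'a pmf) \<Rightarrow> nat set \<Rightarrow> (nat \<Rightarrow> 'a) measure" where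
  "path_marginal K J = distr (path_pmf K (Suc (Sup J))) (PiM J (\<lambda>_. borel)) (\<lambda>l. restrict ((!) l) J)"

lemma distr_restrict_path_pmf_take:
  assumes "J \<subseteq> {..<k}" "k \<le> N"
  shows "distr (path_pmf K N) (PiM J (\<lambda>_. borel)) (\<lambda>l. restrict ((!) l) J)
       = distr (path_pmf K k) (PiM J (\<lambda>_. borel)) (\<lambda>l. restrict ((!) l) J)"
proof -
  have "distr (path_pmf K k) (PiM J (\<lambda>_. borel)) (\<lambda>l. restrict ((!) l) J)
      = distr (distr (path_pmf K N) (count_space UNIV) (take k)) (PiM J (\<lambda>_. borel)) (\<lambda>l. restrict ((!) l) J)"
    using assms(2) by (simp flip: map_take_path_pmf add: map_pmf_rep_eq)
  also have "\<dots> = distr (path_pmf K N) (PiM J (\<lambda>_. borel)) (\<lambda>l. restrict ((!) (take k l)) J)"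
    by (subst distr_distr) (auto simp: space_PiM comp_def)
  also have "\<dots> = distr (path_pmf K N) (PiM J (\<lambda>_. borel)) (\<lambda>l. restrict ((!) l) J)"
    using assms(1) by (intro distr_cong) (auto simp: restrict_def fun_eq_iff)
  finally show ?thesis ..
qed

lemma path_marginal_eq_distr:
  assumes "finite J" "J \<subseteq> {..<N}"
  shows "path_marginal K J = distr (path_pmf K N) (PiM J (\<lambda>_. borel)) (\<lambda>l. restrict ((!) l) J)"
proof -
  have "J \<subseteq> {..<Suc (Sup J)}"
    using assms(1) by (auto simp: less_Suc_eq_le le_cSup_finite)
  with assms(2) show ?thesis
    unfolding path_marginal_def
    using distr_restrict_path_pmf_take[of J _ "max N (Suc (Sup J))" K]
    by (metis max.cobounded1 max.cobounded2)
qed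

lemma polish_projective_path_marginal:
  "polish_projective UNIV (path_marginal (K :: 'a::polish_space list \<Rightarrow> 'a pmf))"
proof (intro polish_projective.intro projective_family.intro)
  fix J H :: "nat set"
  assume "J \<subseteq> H" "finite H"
  then obtain N where "H \<subseteq> {..<N}" "finite J"
    by (metis finite_nat_iff_bounded finite_subset)
  have "distr (path_marginal K H) (PiM J (\<lambda>_. borel)) (\<lambda>f. restrict f J)
      = distr (path_pmf K N) (PiM J (\<lambda>_. borel)) (\<lambda>l. restrict (restrict ((!) l) H) J)"
    using \<open>finite H\<close> \<open>H \<subseteq> {..<N}\<close> \<open>J \<subseteq> H\<close>
    by (simp add: path_marginal_eq_distr, subst distr_distr)
       (auto intro!: measurable_restrict_subset simp: space_PiM comp_def)
  also have "\<dots> = path_marginal K J"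
    using \<open>J \<subseteq> H\<close> \<open>H \<subseteq> {..<N}\<close> \<open>finite J\<close>
    by (simp add: Int_absorb1 path_marginal_eq_distr[of J N])
  finally show "path_marginal K J = distr (path_marginal K H) (PiM J (\<lambda>_. borel)) (\<lambda>f. restrict f J)" ..
next
  show "prob_space (path_marginal K J)" if "finite J" "J \<subseteq> UNIV" for J
    unfolding path_marginal_def
    by (rule prob_space.prob_space_distr) (auto simp: prob_space_measure_pmf space_PiM)
qed

definition path_measure :: "('a::polish_space list \<Rightarrow> 'a pmf) \<Rightarrow> (nat \<Rightarrow> 'a) measure" where
  "path_measure K = projective_family.lim UNIV (path_marginal K) (\<lambda>_. borel)"

lemma prob_space_path_measure: "prob_space (path_measure K)"
proof -
  interpret polish_projective UNIV "path_marginal K"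
    by (rule polish_projective_path_marginal)
  show ?thesis
    unfolding path_measure_def by (rule P.prob_space_axioms)
qed

lemma sets_path_measure: "sets (path_measure K) = sets (PiM UNIV (\<lambda>_. borel))"
proof -
  interpret polish_projective UNIV "path_marginal K"
    by (rule polish_projective_path_marginal)
  show ?thesis
    unfolding path_measure_def by simp
qed

lemma space_path_measure: "space (path_measure K) = space (PiM UNIV (\<lambda>_. borel))"
  using sets_path_measure by (rule sets_eq_imp_space_eq)

lemma measure_path_measure_emb:
  assumes "finite J" "J \<subseteq> {..<N}" "X \<in> sets (PiM J (\<lambda>_. borel))"
  shows "measure (path_measure K) (prod_emb UNIV (\<lambda>_. borel) J X)
       = measure_pmf.prob (path_pmf K N) {l. restrict ((!) l) J \<in> X}"
proof -
  interpret polish_projective UNIV "path_marginal K"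
    by (rule polish_projective_path_marginal)
  have "measure (path_measure K) (emb UNIV J X) = measure (path_marginal K J) X"
    unfolding path_measure_def using assms by (intro measure_lim_emb) auto
  also have "\<dots> = measure_pmf.prob (path_pmf K N) {l. restrict ((!) l) J \<in> X}"
    using assms by (simp add: path_marginal_eq_distr measure_distr space_PiM vimage_def)
  finally show ?thesis .
qed

lemma measure_path_measure_prefix:
  "measure (path_measure K) {\<omega> \<in> space (path_measure K). map \<omega> [0..<t] = l} = pmf (path_pmf K t) l"
proof (cases "length l = t")
  case True
  let ?X = "PiE {..<t} (\<lambda>i. {l ! i})"
  have X: "?X \<in> sets (PiM {..<t} (\<lambda>_. borel))"
    by (intro sets_PiM_I_finite) auto
  have "map \<omega> [0..<t] = l \<longleftrightarrow> restrict \<omega> {..<t} \<in> ?X" for \<omega> :: "nat \<Rightarrow> 'a"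
    using True by (auto simp: list_eq_iff_nth_eq PiE_iff)
  then have "{\<omega> \<in> space (path_measure K). map \<omega> [0..<t] = l} = prod_emb UNIV (\<lambda>_. borel) {..<t} ?X"
    by (auto simp: prod_emb_def space_path_measure space_PiM)
  then have "measure (path_measure K) {\<omega> \<in> space (path_measure K). map \<omega> [0..<t] = l}
      = measure_pmf.prob (path_pmf K t) {l'. restrict ((!) l') {..<t} \<in> ?X}"
    using measure_path_measure_emb[OF finite_lessThan order_refl X] by simp
  also have "\<dots> = measure_pmf.prob (path_pmf K t) ({l'. restrict ((!) l') {..<t} \<in> ?X} \<inter> set_pmf (path_pmf K t))"
    by (simp add: measure_Int_set_pmf)
  also have "{l'. restrict ((!) l') {..<t} \<in> ?X} \<inter> set_pmf (path_pmf K t) = {l} \<inter> set_pmf (path_pmf K t)"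
    using True by (auto dest: length_of_set_path_pmf simp: PiE_iff list_eq_iff_nth_eq)
  finally show ?thesis
    by (simp add: measure_Int_set_pmf measure_pmf_single)
next
  case False
  then have "{\<omega> \<in> space (path_measure K). map \<omega> [0..<t] = l} = {}"
    by auto
  moreover have "l \<notin> set_pmf (path_pmf K t)"
    using False by (auto dest: length_of_set_path_pmf)
  ultimately show ?thesis
    by (metis measure_empty pmf_eq_0_set_pmf)
qed

lemma AE_path_measure_in:
  assumes "\<And>l. set_pmf (K l) \<subseteq> A" "A \<in> sets borel"
  shows "AE \<omega> in path_measure K. \<forall>t. \<omega> t \<in> A"
proof -
  have "AE \<omega> in path_measure K. \<omega> t \<in> A" for t
  proof (rule AE_I')
    interpret prob_space "path_measure K"
      by (rule prob_space_path_measure)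
    let ?N = "prod_emb UNIV (\<lambda>_. borel) {t} (PiE {t} (\<lambda>_. - A))"
    have X: "PiE {t} (\<lambda>_. - A) \<in> sets (PiM {t} (\<lambda>_. borel))"
      using assms(2) by (intro sets_PiM_I_finite) auto
    have "measure (path_measure K) ?N
        = measure_pmf.prob (path_pmf K (Suc t)) {l. restrict ((!) l) {t} \<in> PiE {t} (\<lambda>_. - A)}"
      using X by (intro measure_path_measure_emb) auto
    also have "\<dots> = 0"
      using assms(1) by (auto simp: measure_pmf_zero_iff PiE_iff dest!: length_of_set_path_pmf) blast
    finally show "?N \<in> null_sets (path_measure K)"
      using X by (simp add: null_sets_def emeasure_eq_measure sets_path_measure measurable_prod_emb)
    show "{\<omega> \<in> space (path_measure K). \<omega> t \<notin> A} \<subseteq> ?N"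
      by (auto simp: prod_emb_def space_PiM space_path_measure)
  qed
  then show ?thesis
    by (simp add: AE_all_countable)
qed

lemma hist_against_constant:
  "hist (\<lambda>t \<omega>. \<omega> t) (\<lambda>t \<omega>. c) t \<omega> = map (\<lambda>x. (x, c)) (map \<omega> [0..<t])"
  by (simp add: hist_def)

lemma play_realization_against_constant:
  "play_realization (path_measure (\<lambda>l. \<sigma> (map (\<lambda>x. (x, c)) l))) \<sigma> (\<lambda>_. return_pmf c)
     (\<lambda>t \<omega>. \<omega> t) (\<lambda>t \<omega>. c)"
proof -
  define K where "K l = \<sigma> (map (\<lambda>x. (x, c)) l)" for l
  let ?M = "path_measure K"
  have inj: "inj (\<lambda>x :: real. (x, c))"
    by (simp add: inj_def)
  have "measure ?M {\<omega> \<in> space ?M. hist (\<lambda>t \<omega>. \<omega> t) (\<lambda>t \<omega>. c) t \<omega> = h \<and> \<omega> t = x \<and> c = y}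
      = measure ?M {\<omega> \<in> space ?M. hist (\<lambda>t \<omega>. \<omega> t) (\<lambda>t \<omega>. c) t \<omega> = h} * pmf (\<sigma> h) x * pmf (return_pmf c) y"
    for t h x y
  proof (cases "h \<in> range (map (\<lambda>x. (x, c))) \<and> y = c")
    case True
    then obtain l where h: "h = map (\<lambda>x. (x, c)) l" and "y = c"
      by blast
    have "{\<omega> \<in> space ?M. hist (\<lambda>t \<omega>. \<omega> t) (\<lambda>t \<omega>. c) t \<omega> = h} = {\<omega> \<in> space ?M. map \<omega> [0..<t] = l}"
      using inj by (simp add: h hist_against_constant inj_map_eq_map del: map_map)
    moreover have "{\<omega> \<in> space ?M. hist (\<lambda>t \<omega>. \<omega> t) (\<lambda>t \<omega>. c) t \<omega> = h \<and> \<omega> t = x \<and> c = y}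
        = {\<omega> \<in> space ?M. map \<omega> [0..<Suc t] = l @ [x]}"
      using inj \<open>y = c\<close> by (auto simp: h hist_against_constant inj_map_eq_map simp del: map_map)
    ultimately show ?thesis
      using \<open>y = c\<close> by (simp only: measure_path_measure_prefix pmf_path_pmf_snoc h K_def pmf_return) simp
  next
    case False
    then have "{\<omega> \<in> space ?M. hist (\<lambda>t \<omega>. \<omega> t) (\<lambda>t \<omega>. c) t \<omega> = h \<and> \<omega> t = x \<and> c = y} = {}"
      by (auto simp: hist_against_constant simp del: map_map)
    moreover have "pmf (return_pmf c) y = 0 \<or> {\<omega> \<in> space ?M. hist (\<lambda>t \<omega>. \<omega> t) (\<lambda>t \<omega>. c) t \<omega> = h} = {}"
      using False by (auto simp: hist_against_constant simp del: map_map)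
    ultimately show ?thesis
      by (elim disjE) (simp_all only: measure_empty mult_zero_left mult_zero_right)
  qed
  moreover have "(\<lambda>\<omega>. \<omega> t) \<in> borel_measurable ?M" for t
    by (simp add: measurable_cong_sets[OF sets_path_measure refl])
  ultimately show ?thesis
    unfolding play_realization_def K_def[abs_def] using prob_space_path_measure by simp
qed

lemma finite_actA: "finite (actA n)"
proof -
  have "actA n = (\<lambda>k. real k / real (n + 1)) ` {..n + 1}"
    by (auto simp: actA_def)
  then show ?thesis
    by simp
qed

lemma grid_step_in_actA: "1 / real (n + 1) \<in> actA n"
  unfolding actA_def by (intro CollectI exI[of _ 1]) auto

lemma grid_step_in_actB: "1 / real (n + 1) \<in> actB n"
  unfolding actB_def by (intro CollectI exI[of _ 1]) auto

lemma actA_eq_0_or_ge_grid_step: "a \<in> actA n \<Longrightarrow> a = 0 \<or> 1 / real (n + 1) \<le> a"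
  by (auto simp: actA_def divide_le_cancel)

lemma pinball_regret_ge:
  assumes "a = 0 \<or> c \<le> a" "0 < c" "\<alpha> \<le> 1"
  shows "(1 - (if c \<le> a then 1 else 0)) * (\<alpha> * c) \<le> pinball \<alpha> a c - pinball \<alpha> c c"
  using assms by (auto simp: pinball_def intro: mult_nonpos_nonpos)

lemma eucl_setdist_ge:
  assumes "finite I" "S \<noteq> {}" "\<And>s. s \<in> S \<Longrightarrow> \<exists>i\<in>I. \<delta> \<le> \<bar>v i - s i\<bar>"
  shows "\<delta> \<le> eucl_setdist I v S"
  unfolding eucl_setdist_def
proof (rule cInf_greatest)
  show "{sqrt (\<Sum>i\<in>I. (v i - s i)\<^sup>2) |s. s \<in> S} \<noteq> {}"
    using assms(2) by blast
next
  fix d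
  assume "d \<in> {sqrt (\<Sum>i\<in>I. (v i - s i)\<^sup>2) |s. s \<in> S}"
  then obtain s where "s \<in> S" and d: "d = sqrt (\<Sum>i\<in>I. (v i - s i)\<^sup>2)"
    by blast
  then obtain i where "i \<in> I" "\<delta> \<le> \<bar>v i - s i\<bar>"
    using assms(3) by blast
  moreover have "(v i - s i)\<^sup>2 \<le> (\<Sum>i\<in>I. (v i - s i)\<^sup>2)"
    using assms(1) \<open>i \<in> I\<close> by (intro member_le_sum) auto
  then have "\<bar>v i - s i\<bar> \<le> d"
    unfolding d using real_sqrt_le_mono by fastforce
  ultimately show "\<delta> \<le> d"
    by linarith
qed

lemma regret_or_frequency_large:
  fixes p q \<alpha> k :: real
  assumes "0 < k" "k \<le> 1" "\<alpha> < 1" "(1 - p) * k \<le> q"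
  shows "(1 - \<alpha>) * k / 2 \<le> q \<or> (1 - \<alpha>) * k / 2 \<le> p - \<alpha>"
proof (rule disjCI)
  assume "\<not> (1 - \<alpha>) * k / 2 \<le> p - \<alpha>"
  moreover have "(1 - \<alpha>) * k \<le> 1 - \<alpha>"
    using assms(2,3) by (simp add: mult_left_le)
  ultimately have "(1 - \<alpha>) / 2 \<le> 1 - p"
    by argo
  then have "(1 - \<alpha>) / 2 * k \<le> (1 - p) * k"
    using assms(1) by (intro mult_right_mono) auto
  with assms(4) show "(1 - \<alpha>) * k / 2 \<le> q"
    by simp
qed

lemma eucl_setdist_avg_payoff_ge:
  assumes "0 < \<alpha>" "\<alpha> < 1" "\<And>t. a t \<omega> \<in> actA n" "0 < T"
  shows "(1 - \<alpha>) * (\<alpha> / real (n + 1)) / 2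
    \<le> eucl_setdist (coords n) (avg_payoff \<alpha> a (\<lambda>t \<omega>. 1 / real (n + 1)) T \<omega>) (S_reg n \<alpha>)"
proof -
  define c where "c = 1 / real (n + 1)"
  define v where "v = avg_payoff \<alpha> a (\<lambda>t \<omega>. c) T \<omega>"
  define hits where "hits = (\<Sum>t<T. if c \<le> a t \<omega> then 1 else 0 :: real)"
  have c: "c \<in> actA n" "0 < c" "c \<le> 1"
    using grid_step_in_actA by (auto simp: c_def)
  have "(\<Sum>t<T. (1 - (if c \<le> a t \<omega> then 1 else 0)) * (\<alpha> * c)) \<le> (\<Sum>t<T. pinball \<alpha> (a t \<omega>) c - pinball \<alpha> c c)"
    using assms(1,2,3) actA_eq_0_or_ge_grid_step c
    by (intro sum_mono pinball_regret_ge) (auto simp: c_def)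
  moreover have "(\<Sum>t<T. (1 - (if c \<le> a t \<omega> then 1 else 0)) * (\<alpha> * c)) = (real T - hits) * (\<alpha> * c)"
    by (simp add: hits_def sum_subtractf flip: sum_distrib_right)
  ultimately have "(real T - hits) * (\<alpha> * c) / real T \<le> v (Some c)"
    using assms(4) by (simp add: v_def avg_payoff_def m_reg_def divide_right_mono)
  moreover have "v None = hits / real T"
    by (simp add: v_def avg_payoff_def m_reg_def hits_def)
  then have "(1 - v None) * (\<alpha> * c) = (real T - hits) * (\<alpha> * c) / real T"
    using assms(4) by (simp add: field_simps)
  ultimately have regret: "(1 - v None) * (\<alpha> * c) \<le> v (Some c)"
    by linarith
  have "(1 - \<alpha>) * (\<alpha> * c) / 2 \<le> eucl_setdist (coords n) v (S_reg n \<alpha>)"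
  proof (rule eucl_setdist_ge)
    show "finite (coords n)"
      by (simp add: coords_def finite_actA)
    show "S_reg n \<alpha> \<noteq> {}"
      using assms(1) by (auto simp: S_reg_def intro!: exI[of _ "\<lambda>_. 0"])
    fix s
    assume "s \<in> S_reg n \<alpha>"
    then have "s None \<le> \<alpha>" "s (Some c) \<le> 0"
      using c by (auto simp: S_reg_def)
    moreover have "(1 - \<alpha>) * (\<alpha> * c) / 2 \<le> v (Some c) \<or> (1 - \<alpha>) * (\<alpha> * c) / 2 \<le> v None - \<alpha>"
      using regret assms(1,2) c by (intro regret_or_frequency_large) (auto intro: mult_le_one)
    ultimately have "(1 - \<alpha>) * (\<alpha> * c) / 2 \<le> \<bar>v (Some c) - s (Some c)\<bar>
        \<or> (1 - \<alpha>) * (\<alpha> * c) / 2 \<le> \<bar>v None - s None\<bar>"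
      by linarith
    moreover have "None \<in> coords n" "Some c \<in> coords n"
      using c by (auto simp: coords_def)
    ultimately show "\<exists>i\<in>coords n. (1 - \<alpha>) * (\<alpha> * c) / 2 \<le> \<bar>v i - s i\<bar>"
      by blast
  qed
  then show ?thesis
    by (simp add: v_def c_def)
qed

lemma not_AE_approach_against_grid_step:
  assumes "0 < \<alpha>" "\<alpha> < 1" "strategy_on (actA n) \<sigma>"
  shows "\<not> (AE \<omega> in path_measure (\<lambda>l. \<sigma> (map (\<lambda>x. (x, 1 / real (n + 1))) l)).
    (\<lambda>T. eucl_setdist (coords n) (avg_payoff \<alpha> (\<lambda>t \<omega>. \<omega> t) (\<lambda>t \<omega>. 1 / real (n + 1)) T \<omega>) (S_reg n \<alpha>))
      \<longlonglongrightarrow> 0)"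
    (is "\<not> (AE \<omega> in ?M. ?converges \<omega>)")
proof
  assume "AE \<omega> in ?M. ?converges \<omega>"
  moreover have "AE \<omega> in ?M. \<forall>t. \<omega> t \<in> actA n"
    using assms(3) unfolding strategy_on_def
    by (intro AE_path_measure_in) (auto simp: finite_actA finite_imp_closed)
  ultimately have "AE \<omega> in ?M. False"
  proof eventually_elim
    case (elim \<omega>)
    have "(1 - \<alpha>) * (\<alpha> / real (n + 1)) / 2 \<le> 0"
      using eucl_setdist_avg_payoff_ge[OF assms(1,2), of "\<lambda>t \<omega>. \<omega> t" \<omega> n] elim(2)
      by (intro LIMSEQ_le_const[OF elim(1)] exI[of _ 1]) auto
    moreover have "0 < (1 - \<alpha>) * (\<alpha> / real (n + 1)) / 2"
      using assms(1,2) by simp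
    ultimately show False
      by linarith
  qed
  then show False
    using prob_space.AE_False[OF prob_space_path_measure] by blast
qed

theorem theorem4:
  fixes n :: nat and \<alpha> :: real
  assumes "n \<ge> 1" and "0 < \<alpha>" and "\<alpha> < 1"
  shows "\<not> (\<exists>\<sigma>. strategy_on (actA n) \<sigma> \<and>
            (\<forall>\<tau>. strategy_on (actB n) \<tau> \<longrightarrow>
              (\<forall>(M :: (nat \<Rightarrow> real) measure) a b. play_realization M \<sigma> \<tau> a b \<longrightarrow>
                 (AE \<omega> in M. (\<lambda>T. eucl_setdist (coords n) (avg_payoff \<alpha> a b T \<omega>) (S_reg n \<alpha>))
                                 \<longlonglongrightarrow> 0))))"
proof -
  have "strategy_on (actB n) (\<lambda>_. return_pmf (1 / real (n + 1)))"
    using grid_step_in_actB by (simp add: strategy_on_def)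
  then show ?thesis
    using not_AE_approach_against_grid_step[OF assms(2,3)] play_realization_against_constant
    by blast
qed

end
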